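(* A bijection $\kappa:\mathcal G\to\mathcal G$ is an automorphism of the Grassmann graph $(\mathcal G,\sim)$ (i.e. $X\sim Y\iff X^\kappa\sim Y^\kappa$ for all $X,Y\in\mathcal G$) if and only if it is a collineation of the Grassmann space $(\mathcal G,\mathfrak P)$ (i.e. $\kappa$ and $\kappa^{-1}$ map pencils onto pencils).
   Context: $K$ is a (not necessarily commutative) field and $V$ is a left vector space over $K$ of arbitrary (possibly infinite) dimension with $\dim V>2$. $\mathcal G:=\{X\le V\mid X\cong V/X\}$, assumed nonempty. $X,Y\in\mathcal G$ are adjacent ($X\sim Y$) if $\dim((X+Y)/X)=\dim((X+Y)/Y)=1$. A pencil is a set $\mathcal G[M,N]:=\{X\in\mathcal G\mid M<X<N\}$, where $M,N\le V$ are subspaces such that there exists $X\in\mathcal G$ with $M\le X\le N$ and $\dim(X/M)=\dim(N/X)=1$; $\mathfrak P$ denotes the set of all pencils. *)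

theory Defs
  imports Main
begin

text \<open>A left vector space over a (possibly non-commutative) field, i.e. a division ring 'k,
  with underlying additive group 'v (the whole type is V) and scalar multiplication sm.\<close>

definition left_vector_space :: "('k::division_ring \<Rightarrow> 'v::ab_group_add \<Rightarrow> 'v) \<Rightarrow> bool" where
  "left_vector_space sm \<longleftrightarrow>
     (\<forall>a x y. sm a (x + y) = sm a x + sm a y) \<and>
     (\<forall>a b x. sm (a + b) x = sm a x + sm b x) \<and>
     (\<forall>a b x. sm (a * b) x = sm a (sm b x)) \<and>
     (\<forall>x. sm 1 x = x)"

definition dim_gt_2 :: "('k::division_ring \<Rightarrow> 'v::ab_group_add \<Rightarrow> 'v) \<Rightarrow> bool" where
  "dim_gt_2 sm \<longleftrightarrow> (\<exists>u v w. \<forall>a b c. sm a u + sm b v + sm c w = 0 \<longrightarrow> a = 0 \<and> b = 0 \<and> c = 0)"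

definition subspace :: "('k::division_ring \<Rightarrow> 'v::ab_group_add \<Rightarrow> 'v) \<Rightarrow> 'v set \<Rightarrow> bool" where
  "subspace sm X \<longleftrightarrow> 0 \<in> X \<and> (\<forall>x\<in>X. \<forall>y\<in>X. x + y \<in> X) \<and> (\<forall>a. \<forall>x\<in>X. sm a x \<in> X)"

definition coset :: "'v::ab_group_add \<Rightarrow> 'v set \<Rightarrow> 'v set" where
  "coset v X = {v + x | x. x \<in> X}"

text \<open>X is isomorphic (as a left K-vector space) to the quotient V/X: there is a bijection f from
  X onto the set of cosets of X which is linear w.r.t. the quotient operations
  (v+X) + (w+X) = (v+w)+X and a(v+X) = (av)+X.\<close>
definition iso_quot :: "('k::division_ring \<Rightarrow> 'v::ab_group_add \<Rightarrow> 'v) \<Rightarrow> 'v set \<Rightarrow> bool" where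
  "iso_quot sm X \<longleftrightarrow> (\<exists>f. bij_betw f X {coset v X | v. True} \<and>
      (\<forall>x\<in>X. \<forall>y\<in>X. \<forall>u\<in>f x. \<forall>w\<in>f y. f (x + y) = coset (u + w) X) \<and>
      (\<forall>a. \<forall>x\<in>X. \<forall>u\<in>f x. f (sm a x) = coset (sm a u) X))"

definition quot_dim1 :: "('k::division_ring \<Rightarrow> 'v::ab_group_add \<Rightarrow> 'v) \<Rightarrow> 'v set \<Rightarrow> 'v set \<Rightarrow> bool" where
  "quot_dim1 sm A B \<longleftrightarrow> B \<subseteq> A \<and> (\<exists>v\<in>A. v \<notin> B \<and> A = {b + sm a v | b a. b \<in> B})"

definition sum_space :: "'v::ab_group_add set \<Rightarrow> 'v set \<Rightarrow> 'v set" where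
  "sum_space X Y = {x + y | x y. x \<in> X \<and> y \<in> Y}"

definition Grass :: "('k::division_ring \<Rightarrow> 'v::ab_group_add \<Rightarrow> 'v) \<Rightarrow> 'v set set" where
  "Grass sm = {X. subspace sm X \<and> iso_quot sm X}"

definition adjacent :: "('k::division_ring \<Rightarrow> 'v::ab_group_add \<Rightarrow> 'v) \<Rightarrow> 'v set \<Rightarrow> 'v set \<Rightarrow> bool" where
  "adjacent sm X Y \<longleftrightarrow> quot_dim1 sm (sum_space X Y) X \<and> quot_dim1 sm (sum_space X Y) Y"

definition pencil_set :: "('k::division_ring \<Rightarrow> 'v::ab_group_add \<Rightarrow> 'v) \<Rightarrow> 'v set \<Rightarrow> 'v set \<Rightarrow> 'v set set" where
  "pencil_set sm M N = {X \<in> Grass sm. M \<subset> X \<and> X \<subset> N}"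

definition pencils :: "('k::division_ring \<Rightarrow> 'v::ab_group_add \<Rightarrow> 'v) \<Rightarrow> 'v set set set" where
  "pencils sm = {pencil_set sm M N | M N. subspace sm M \<and> subspace sm N \<and>
      (\<exists>X\<in>Grass sm. M \<subseteq> X \<and> X \<subseteq> N \<and> quot_dim1 sm X M \<and> quot_dim1 sm N X)}"

end

theory Submission
  imports Defs
begin

text \<open>Adjacency determines the pencils: if \<open>X \<sim> Y\<close>, the pencil \<open>\<G>[X \<inter> Y, X + Y]\<close> is exactly
  the set of \<open>Z \<in> \<G>\<close> such that every \<open>W \<in> \<G>\<close> equal or adjacent to both \<open>X\<close> and \<open>Y\<close> is equal
  or adjacent to \<open>Z\<close>. So an automorphism of the Grassmann graph and its inverse map pencils to
  pencils. Conversely, two distinct members of \<open>\<G>\<close> are adjacent iff they lie in a common pencil,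
  so a collineation preserves adjacency in both directions.

  The inclusion of that set in the pencil is the real work. A common neighbour \<open>Z\<close> of
  \<open>X\<close> and \<open>Y\<close> either contains \<open>X \<inter> Y\<close> or lies in \<open>X + Y\<close>; if only one of these held, we exhibit
  a common neighbour \<open>W \<in> \<G>\<close> of \<open>X, Y\<close> that is neither equal nor adjacent to \<open>Z\<close>. Such \<open>W\<close>
  are obtained from \<open>X\<close> by exchanging one vector, and they lie in \<open>\<G>\<close> because \<open>\<G>\<close> is invariant
  under linear automorphisms of \<open>V\<close>. That the needed vectors exist (\<open>X \<inter> Y \<noteq> 0\<close>,
  \<open>X + Y \<noteq> V\<close>) is where \<open>dim V > 2\<close> enters: no member of \<open>\<G>\<close> is a line or a hyperplane.\<close>

lemma exists_nontrivial_solution_1x2: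
  fixes x y :: "'k::division_ring"
  shows "\<exists>\<alpha> \<beta>. (\<alpha> \<noteq> 0 \<or> \<beta> \<noteq> 0) \<and> \<alpha> * x + \<beta> * y = 0"
proof (cases "x = 0")
  case True
  then show ?thesis by (intro exI[of _ 1] exI[of _ 0]) simp
next
  case False
  then show ?thesis by (intro exI[of _ "- (y * inverse x)"] exI[of _ 1]) (simp add: mult.assoc)
qed

lemma exists_nontrivial_solution_2x3:
  fixes a1 a2 a3 b1 b2 b3 :: "'k::division_ring"
  shows "\<exists>\<alpha> \<beta> \<gamma>. (\<alpha> \<noteq> 0 \<or> \<beta> \<noteq> 0 \<or> \<gamma> \<noteq> 0) \<and>
    \<alpha> * a1 + \<beta> * a2 + \<gamma> * a3 = 0 \<and> \<alpha> * b1 + \<beta> * b2 + \<gamma> * b3 = 0"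
proof (cases "a1 = 0")
  case False
  \<comment> \<open>eliminate \<open>\<alpha>\<close> using the first equation\<close>
  obtain \<beta> \<gamma> where \<beta>\<gamma>: "\<beta> \<noteq> 0 \<or> \<gamma> \<noteq> 0"
    "\<beta> * (b2 - a2 * inverse a1 * b1) + \<gamma> * (b3 - a3 * inverse a1 * b1) = 0"
    using exists_nontrivial_solution_1x2 by blast
  define \<alpha> where "\<alpha> = - (\<beta> * a2 + \<gamma> * a3) * inverse a1"
  have "\<alpha> * a1 = - (\<beta> * a2 + \<gamma> * a3)"
    unfolding \<alpha>_def using False by (simp add: mult.assoc)
  moreover have "\<alpha> * b1 + \<beta> * b2 + \<gamma> * b3 =
      \<beta> * (b2 - a2 * inverse a1 * b1) + \<gamma> * (b3 - a3 * inverse a1 * b1)"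
    unfolding \<alpha>_def by (simp add: algebra_simps)
  ultimately show ?thesis
    using \<beta>\<gamma> by (intro exI[of _ \<alpha>] exI[of _ \<beta>] exI[of _ \<gamma>]) simp
next
  case a1: True
  show ?thesis
  proof (cases "b1 = 0")
    case True
    with a1 show ?thesis by (intro exI[of _ 1] exI[of _ 0] exI[of _ 0]) simp
  next
    case False
    obtain \<beta> \<gamma> where \<beta>\<gamma>: "\<beta> \<noteq> 0 \<or> \<gamma> \<noteq> 0" "\<beta> * a2 + \<gamma> * a3 = 0"
      using exists_nontrivial_solution_1x2 by blast
    define \<alpha> where "\<alpha> = - (\<beta> * b2 + \<gamma> * b3) * inverse b1"
    have "\<alpha> * b1 = - (\<beta> * b2 + \<gamma> * b3)"
      unfolding \<alpha>_def using False by (simp add: mult.assoc)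
    then have "\<alpha> * b1 + \<beta> * b2 + \<gamma> * b3 = 0"
      by (simp add: add.assoc)
    with \<beta>\<gamma> a1 show ?thesis by (intro exI[of _ \<alpha>] exI[of _ \<beta>] exI[of _ \<gamma>]) simp
  qed
qed

lemma coset_linear_image:
  assumes add: "\<And>x y. T (x + y) = T x + T y"
  shows "T ` coset v X = coset (T v) (T ` X)"
proof
  show "T ` coset v X \<subseteq> coset (T v) (T ` X)"
    unfolding coset_def using add by blast
  show "coset (T v) (T ` X) \<subseteq> T ` coset v X"
  proof
    fix z assume "z \<in> coset (T v) (T ` X)"
    then obtain x where "z = T (v + x)" "x \<in> X" unfolding coset_def using add by auto
    then show "z \<in> T ` coset v X" unfolding coset_def by blast
  qed
qed

lemma bij_betw_cosets_linear_image:
  fixes T :: "'v::ab_group_add \<Rightarrow> 'v"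
  assumes add: "\<And>x y. T (x + y) = T x + T y" and "bij T"
    and bij: "bij_betw f X {coset v X | v. True}"
  shows "bij_betw (\<lambda>y. T ` f (inv T y)) (T ` X) {coset v (T ` X) | v. True}"
proof -
  have T_inv: "T (inv T y) = y" "inv T (T x) = x" for x y
    using \<open>bij T\<close> by (simp_all add: bij_is_inj bij_is_surj surj_f_inv_f)
  have "inj T" using \<open>bij T\<close> by (rule bij_is_inj)
  have "inj_on (\<lambda>y. T ` f (inv T y)) (T ` X)"
  proof (rule inj_onI)
    fix y1 y2 assume "y1 \<in> T ` X" "y2 \<in> T ` X" "T ` f (inv T y1) = T ` f (inv T y2)"
    then obtain x1 x2 where "y1 = T x1" "y2 = T x2" "x1 \<in> X" "x2 \<in> X" "T ` f x1 = T ` f x2"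
      using T_inv by auto
    moreover from \<open>T ` f x1 = T ` f x2\<close> have "f x1 = f x2"
      using \<open>inj T\<close> by (simp add: inj_image_eq_iff)
    ultimately show "y1 = y2"
      using bij unfolding bij_betw_def inj_on_def by blast
  qed
  moreover have "(\<lambda>y. T ` f (inv T y)) ` T ` X = {coset v (T ` X) | v. True}"
  proof (intro set_eqI iffI)
    fix z assume "z \<in> (\<lambda>y. T ` f (inv T y)) ` T ` X"
    then obtain x where "x \<in> X" "z = T ` f x" using T_inv by auto
    then show "z \<in> {coset v (T ` X) | v. True}"
      using bij_betwE[OF bij] coset_linear_image[OF add] by fastforce
  next
    fix z assume "z \<in> {coset v (T ` X) | v. True}"
    then obtain v where z: "z = coset v (T ` X)" by blast
    have "coset (inv T v) X \<in> f ` X" using bij unfolding bij_betw_def by blast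
    then obtain x where "x \<in> X" "f x = coset (inv T v) X" by (metis imageE)
    then have "T ` f (inv T (T x)) = z"
      unfolding z by (simp add: coset_linear_image[OF add] T_inv)
    with \<open>x \<in> X\<close> show "z \<in> (\<lambda>y. T ` f (inv T y)) ` T ` X" by blast
  qed
  ultimately show ?thesis unfolding bij_betw_def ..
qed

locale left_vs =
  fixes sm :: "'k::division_ring \<Rightarrow> 'v::ab_group_add \<Rightarrow> 'v"
  assumes left_vector_space: "left_vector_space sm"
begin

lemma smult_add_right: "sm a (x + y) = sm a x + sm a y"
  using left_vector_space unfolding left_vector_space_def by blast

lemma smult_add_left: "sm (a + b) x = sm a x + sm b x"
  using left_vector_space unfolding left_vector_space_def by blast

lemma smult_assoc: "sm (a * b) x = sm a (sm b x)"
  using left_vector_space unfolding left_vector_space_def by blast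

lemma smult_one [simp]: "sm 1 x = x"
  using left_vector_space unfolding left_vector_space_def by blast

lemma smult_zero_left [simp]: "sm 0 x = 0"
  using smult_add_left[of 0 0 x] by simp

lemma smult_zero_right [simp]: "sm a 0 = 0"
  using smult_add_right[of a 0 0] by simp

lemma smult_minus_left: "sm (- a) x = - sm a x"
  using smult_add_left[of a "- a" x] by (simp add: eq_neg_iff_add_eq_0 add.commute)

lemma smult_minus_right: "sm a (- x) = - sm a x"
  using smult_add_right[of a x "- x"] by (simp add: eq_neg_iff_add_eq_0 add.commute)

lemma smult_diff_left: "sm (a - b) x = sm a x - sm b x"
  using smult_add_left[of a "- b" x] smult_minus_left by simp

lemma smult_diff_right: "sm a (x - y) = sm a x - sm a y"
  using smult_add_right[of a x "- y"] smult_minus_right by simp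

lemma smult_inverse_cancel: "a \<noteq> 0 \<Longrightarrow> sm (inverse a) (sm a x) = x"
  by (simp flip: smult_assoc)

lemma subspace_0: "subspace sm X \<Longrightarrow> 0 \<in> X"
  unfolding subspace_def by blast

lemma subspace_add: "subspace sm X \<Longrightarrow> x \<in> X \<Longrightarrow> y \<in> X \<Longrightarrow> x + y \<in> X"
  unfolding subspace_def by blast

lemma subspace_smult: "subspace sm X \<Longrightarrow> x \<in> X \<Longrightarrow> sm a x \<in> X"
  unfolding subspace_def by blast

lemma subspace_neg: "subspace sm X \<Longrightarrow> x \<in> X \<Longrightarrow> - x \<in> X"
  using subspace_smult[of X x "- 1"] smult_minus_left[of 1 x] by simp

lemma subspace_diff: "subspace sm X \<Longrightarrow> x \<in> X \<Longrightarrow> y \<in> X \<Longrightarrow> x - y \<in> X"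
  using subspace_add[of X x "- y"] subspace_neg[of X y] by simp

lemma subspace_add_cancel_right: "subspace sm X \<Longrightarrow> x + y \<in> X \<Longrightarrow> y \<in> X \<Longrightarrow> x \<in> X"
  using subspace_diff[of X "x + y" y] by simp

lemma subspace_Int: "subspace sm X \<Longrightarrow> subspace sm Y \<Longrightarrow> subspace sm (X \<inter> Y)"
  unfolding subspace_def by blast

lemma subspace_UNIV: "subspace sm UNIV"
  unfolding subspace_def by blast

lemma subspace_zero_space: "subspace sm {0}"
  unfolding subspace_def by simp

lemma subspace_Union_chain:
  assumes "\<C> \<noteq> {}" and "\<And>C. C \<in> \<C> \<Longrightarrow> subspace sm C"
    and "\<And>C D. C \<in> \<C> \<Longrightarrow> D \<in> \<C> \<Longrightarrow> C \<subseteq> D \<or> D \<subseteq> C"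
  shows "subspace sm (\<Union>\<C>)"
  unfolding subspace_def
proof (intro conjI ballI allI)
  show "0 \<in> \<Union>\<C>" using assms(1,2) subspace_0 by blast
next
  fix x y assume "x \<in> \<Union>\<C>" "y \<in> \<Union>\<C>"
  then obtain C D where "x \<in> C" "y \<in> D" "C \<in> \<C>" "D \<in> \<C>" by blast
  then show "x + y \<in> \<Union>\<C>" using assms(2,3) subspace_add by (metis UnionI subsetD)
next
  fix a x assume "x \<in> \<Union>\<C>"
  then show "sm a x \<in> \<Union>\<C>" using assms(2) subspace_smult by blast
qed

lemma subspace_sum_space:
  assumes X: "subspace sm X" and Y: "subspace sm Y"
  shows "subspace sm (sum_space X Y)"
  unfolding subspace_def
proof (intro conjI ballI allI)
  show "0 \<in> sum_space X Y"
    unfolding sum_space_def using subspace_0[OF X] subspace_0[OF Y] by force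
next
  fix u w assume "u \<in> sum_space X Y" "w \<in> sum_space X Y"
  then obtain x1 y1 x2 y2 where "u = x1 + y1" "w = x2 + y2" "x1 \<in> X" "x2 \<in> X" "y1 \<in> Y" "y2 \<in> Y"
    unfolding sum_space_def by blast
  moreover have "x1 + y1 + (x2 + y2) = (x1 + x2) + (y1 + y2)" by (simp add: algebra_simps)
  ultimately show "u + w \<in> sum_space X Y"
    unfolding sum_space_def using subspace_add[OF X] subspace_add[OF Y] by blast
next
  fix a u assume "u \<in> sum_space X Y"
  then obtain x y where "u = x + y" "x \<in> X" "y \<in> Y"
    unfolding sum_space_def by blast
  then show "sm a u \<in> sum_space X Y"
    unfolding sum_space_def using subspace_smult[OF X] subspace_smult[OF Y] smult_add_right by blast
qed

lemma sum_space_commute: "sum_space X Y = sum_space Y X"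
  unfolding sum_space_def by (auto simp: add.commute) (metis add.commute)+

lemma sum_space_upper1: "subspace sm Y \<Longrightarrow> X \<subseteq> sum_space X Y"
  unfolding sum_space_def using subspace_0 by force

lemma sum_space_upper2: "subspace sm X \<Longrightarrow> Y \<subseteq> sum_space X Y"
  unfolding sum_space_def using subspace_0 by force

lemma sum_space_least: "subspace sm Z \<Longrightarrow> X \<subseteq> Z \<Longrightarrow> Y \<subseteq> Z \<Longrightarrow> sum_space X Y \<subseteq> Z"
  unfolding sum_space_def using subspace_add by blast

lemma sum_space_absorb: "subspace sm X \<Longrightarrow> subspace sm Y \<Longrightarrow> X \<subseteq> Y \<Longrightarrow> sum_space X Y = Y"
  using sum_space_least[of Y X Y] sum_space_upper2[of X Y] by blast

subsection \<open>Adjoining a vector to a subspace\<close>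

definition adjoin :: "'v set \<Rightarrow> 'v \<Rightarrow> 'v set" where
  "adjoin B v = {b + sm a v | b a. b \<in> B}"

lemma quot_dim1_iff_adjoin: "quot_dim1 sm A B \<longleftrightarrow> B \<subseteq> A \<and> (\<exists>v\<in>A. v \<notin> B \<and> A = adjoin B v)"
  unfolding quot_dim1_def adjoin_def by simp

lemma adjoin_memI: "b \<in> B \<Longrightarrow> b + sm a v \<in> adjoin B v"
  unfolding adjoin_def by blast

lemma adjoin_upper: "B \<subseteq> adjoin B v"
  using adjoin_memI[of _ B 0 v] by auto

lemma adjoin_vector: "subspace sm B \<Longrightarrow> v \<in> adjoin B v"
  using adjoin_memI[of 0 B 1 v] subspace_0 by auto

lemma adjoin_least: "subspace sm Z \<Longrightarrow> B \<subseteq> Z \<Longrightarrow> v \<in> Z \<Longrightarrow> adjoin B v \<subseteq> Z"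
  unfolding adjoin_def using subspace_add subspace_smult by blast

lemma subspace_adjoin:
  assumes B: "subspace sm B"
  shows "subspace sm (adjoin B v)"
  unfolding subspace_def
proof (intro conjI ballI allI)
  show "0 \<in> adjoin B v"
    using adjoin_upper subspace_0[OF B] by blast
next
  fix u w assume "u \<in> adjoin B v" "w \<in> adjoin B v"
  then obtain b1 a1 b2 a2 where "u = b1 + sm a1 v" "w = b2 + sm a2 v" "b1 \<in> B" "b2 \<in> B"
    unfolding adjoin_def by blast
  moreover have "b1 + sm a1 v + (b2 + sm a2 v) = (b1 + b2) + sm (a1 + a2) v"
    by (simp add: algebra_simps smult_add_left)
  ultimately show "u + w \<in> adjoin B v"
    using adjoin_memI subspace_add[OF B] by metis
next
  fix a u assume "u \<in> adjoin B v"
  then obtain b1 a1 where "u = b1 + sm a1 v" "b1 \<in> B"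
    unfolding adjoin_def by blast
  then show "sm a u \<in> adjoin B v"
    using adjoin_memI[of "sm a b1" B "a * a1" v] subspace_smult[OF B]
    by (simp add: smult_add_right smult_assoc)
qed

lemma adjoin_exchange:
  assumes B: "subspace sm B" and v: "v \<in> adjoin B u" "v \<notin> B"
  shows "adjoin B v = adjoin B u"
proof -
  obtain b a where vb: "v = b + sm a u" "b \<in> B" using v unfolding adjoin_def by blast
  have "a \<noteq> 0" using vb v by auto
  then have "u = - sm (inverse a) b + sm (inverse a) v"
    using vb by (simp add: smult_add_right smult_inverse_cancel)
  then have "u \<in> adjoin B v"
    using adjoin_memI[of "- sm (inverse a) b" B "inverse a" v] subspace_neg[OF B]
      subspace_smult[OF B] vb(2) by simp
  then have "adjoin B u \<subseteq> adjoin B v"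
    using adjoin_least[OF subspace_adjoin[OF B] adjoin_upper] by blast
  moreover have "adjoin B v \<subseteq> adjoin B u"
    using adjoin_least[OF subspace_adjoin[OF B] adjoin_upper] v(1) by blast
  ultimately show ?thesis by blast
qed

lemma not_in_adjoin:
  assumes M: "subspace sm M" and N: "subspace sm N" and "M \<subseteq> N"
    and z: "z \<in> N" "z \<notin> M" and w: "w \<notin> N"
  shows "z \<notin> adjoin M w"
proof
  assume "z \<in> adjoin M w"
  then have "w \<in> adjoin M z"
    using adjoin_exchange[OF M _ z(2)] adjoin_vector[OF M] by blast
  then show False
    using adjoin_least[OF N \<open>M \<subseteq> N\<close> z(1)] w by blast
qed

lemma quot_dim1_adjoin: "subspace sm B \<Longrightarrow> v \<notin> B \<Longrightarrow> quot_dim1 sm (adjoin B v) B"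
  unfolding quot_dim1_iff_adjoin using adjoin_upper adjoin_vector by blast

lemma quot_dim1_eq_adjoin:
  assumes B: "subspace sm B" and q: "quot_dim1 sm A B" and v: "v \<in> A" "v \<notin> B"
  shows "A = adjoin B v"
proof -
  obtain u where "A = adjoin B u" using q unfolding quot_dim1_iff_adjoin by blast
  then show ?thesis using adjoin_exchange[OF B, of v u] v by simp
qed

lemma quot_dim1_subset: "quot_dim1 sm A B \<Longrightarrow> B \<subseteq> A"
  unfolding quot_dim1_def by blast

lemma quot_dim1_neq: "quot_dim1 sm A B \<Longrightarrow> A \<noteq> B"
  unfolding quot_dim1_def by blast

lemma quot_dim1_psubset: "quot_dim1 sm A B \<Longrightarrow> B \<subset> A"
  using quot_dim1_subset quot_dim1_neq by blast

lemma quot_dim1_between: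
  assumes B: "subspace sm B" and C: "subspace sm C" and q: "quot_dim1 sm A B"
    and "B \<subseteq> C" "C \<subseteq> A"
  shows "C = B \<or> C = A"
proof (cases "C = B")
  case False
  then obtain c where "c \<in> C" "c \<notin> B" using assms by blast
  then have "A = adjoin B c" using quot_dim1_eq_adjoin[OF B q] assms by blast
  then have "A \<subseteq> C" using adjoin_least[OF C] \<open>c \<in> C\<close> assms by blast
  then show ?thesis using assms by blast
qed simp

lemma sum_space_adjoin:
  assumes A: "subspace sm A" and B: "subspace sm B" and "B \<subseteq> A"
  shows "sum_space A (adjoin B z) = adjoin A z"
proof
  have "adjoin B z \<subseteq> adjoin A z"
    using \<open>B \<subseteq> A\<close> adjoin_upper[of A z]
    by (intro adjoin_least[OF subspace_adjoin[OF A]] adjoin_vector[OF A]) blast+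
  then show "sum_space A (adjoin B z) \<subseteq> adjoin A z"
    by (intro sum_space_least[OF subspace_adjoin[OF A]] adjoin_upper)
  have "z \<in> sum_space A (adjoin B z)"
    using sum_space_upper2[OF A] adjoin_vector[OF B] by blast
  then show "adjoin A z \<subseteq> sum_space A (adjoin B z)"
    by (intro adjoin_least[OF subspace_sum_space[OF A subspace_adjoin[OF B]]]
        sum_space_upper1[OF subspace_adjoin[OF B]])
qed

lemma adjoin_commute:
  assumes S: "subspace sm S"
  shows "adjoin (adjoin S p) q = adjoin (adjoin S q) p"
proof -
  have "adjoin (adjoin S p) q = sum_space (adjoin S p) (adjoin S q)"
    using sum_space_adjoin[OF subspace_adjoin[OF S] S adjoin_upper] by simp
  also have "\<dots> = sum_space (adjoin S q) (adjoin S p)"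
    by (rule sum_space_commute)
  also have "\<dots> = adjoin (adjoin S q) p"
    using sum_space_adjoin[OF subspace_adjoin[OF S] S adjoin_upper] by simp
  finally show ?thesis .
qed

subsection \<open>Complements and dimension\<close>

lemma dim_gt_2_not_spanned_by_two:
  assumes "dim_gt_2 sm"
  shows "\<exists>v. \<forall>a b. v \<noteq> sm a p + sm b q"
proof (rule ccontr)
  assume "\<not> ?thesis"
  then have span: "\<forall>v. \<exists>a b. v = sm a p + sm b q" by blast
  obtain u v w where indep: "\<forall>a b c. sm a u + sm b v + sm c w = 0 \<longrightarrow> a = 0 \<and> b = 0 \<and> c = 0"
    using assms unfolding dim_gt_2_def by blast
  obtain a1 b1 a2 b2 a3 b3 where
    uvw: "u = sm a1 p + sm b1 q" "v = sm a2 p + sm b2 q" "w = sm a3 p + sm b3 q"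
    using span by meson
  obtain \<alpha> \<beta> \<gamma> where sol: "\<alpha> \<noteq> 0 \<or> \<beta> \<noteq> 0 \<or> \<gamma> \<noteq> 0"
    "\<alpha> * a1 + \<beta> * a2 + \<gamma> * a3 = 0" "\<alpha> * b1 + \<beta> * b2 + \<gamma> * b3 = 0"
    using exists_nontrivial_solution_2x3 by blast
  have "sm \<alpha> u + sm \<beta> v + sm \<gamma> w =
      sm (\<alpha> * a1 + \<beta> * a2 + \<gamma> * a3) p + sm (\<alpha> * b1 + \<beta> * b2 + \<gamma> * b3) q"
    unfolding uvw by (simp add: smult_add_left smult_add_right smult_assoc add_ac)
  with sol indep show False by simp
qed

lemma Int_adjoin_trivial:
  assumes A: "subspace sm A" and C: "subspace sm C" and AC: "A \<inter> C = {0}"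
    and b: "b \<notin> sum_space A C"
  shows "A \<inter> adjoin C b = {0}"
proof (rule ccontr)
  assume "A \<inter> adjoin C b \<noteq> {0}"
  then obtain x where x: "x \<in> A" "x \<in> adjoin C b" "x \<noteq> 0"
    using subspace_0[OF A] subspace_0[OF subspace_adjoin[OF C]] by blast
  then have "x \<notin> C" using AC by blast
  then have "b \<in> adjoin C x"
    using adjoin_exchange[OF C x(2)] adjoin_vector[OF C] by blast
  moreover have "adjoin C x \<subseteq> sum_space A C"
    using x(1) sum_space_upper1[OF C] sum_space_upper2[OF A]
    by (intro adjoin_least[OF subspace_sum_space[OF A C]]) blast+
  ultimately show False using b by blast
qed

lemma exists_maximal_disjoint_subspace:
  assumes A: "subspace sm A" and B: "subspace sm B"
  obtains C where "subspace sm C" "C \<subseteq> B" "A \<inter> C = {0}"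
    and "\<And>D. subspace sm D \<Longrightarrow> D \<subseteq> B \<Longrightarrow> A \<inter> D = {0} \<Longrightarrow> C \<subseteq> D \<Longrightarrow> D = C"
proof -
  define \<A> where "\<A> = {C. subspace sm C \<and> C \<subseteq> B \<and> A \<inter> C = {0}}"
  have "\<exists>M\<in>\<A>. \<forall>X\<in>\<A>. M \<subseteq> X \<longrightarrow> X = M"
  proof (rule subset_Zorn_nonempty)
    show "\<A> \<noteq> {}"
      unfolding \<A>_def using subspace_zero_space subspace_0[OF A] subspace_0[OF B] by blast
  next
    fix \<C> assume ne: "\<C> \<noteq> {}" and chain: "subset.chain \<A> \<C>"
    then have sub: "\<C> \<subseteq> \<A>" unfolding subset.chain_def by blast
    have "subspace sm (\<Union>\<C>)"
    proof (rule subspace_Union_chain[OF ne])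
      show "subspace sm C" if "C \<in> \<C>" for C
        using that sub unfolding \<A>_def by blast
      show "C \<subseteq> D \<or> D \<subseteq> C" if "C \<in> \<C>" "D \<in> \<C>" for C D
        using that chain unfolding subset.chain_def by blast
    qed
    moreover have "\<Union>\<C> \<subseteq> B" using sub unfolding \<A>_def by blast
    moreover have "A \<inter> C = {0}" if "C \<in> \<C>" for C using that sub unfolding \<A>_def by blast
    then have "A \<inter> \<Union>\<C> = {0}" using ne by auto
    ultimately show "\<Union>\<C> \<in> \<A>" unfolding \<A>_def by blast
  qed
  then obtain C where "C \<in> \<A>" and "\<And>X. X \<in> \<A> \<Longrightarrow> C \<subseteq> X \<Longrightarrow> X = C"
    by blast
  then show thesis
    unfolding \<A>_def by (intro that) auto
qed

lemma exists_complement: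
  assumes A: "subspace sm A" and B: "subspace sm B" and "A \<subseteq> B"
  obtains C where "subspace sm C" "C \<subseteq> B" "A \<inter> C = {0}" "sum_space A C = B"
proof -
  obtain C where C: "subspace sm C" "C \<subseteq> B" "A \<inter> C = {0}"
    and maximal: "\<And>D. subspace sm D \<Longrightarrow> D \<subseteq> B \<Longrightarrow> A \<inter> D = {0} \<Longrightarrow> C \<subseteq> D \<Longrightarrow> D = C"
    using exists_maximal_disjoint_subspace[OF A B] by blast
  have "b \<in> sum_space A C" if "b \<in> B" for b
  proof (rule ccontr)
    assume b: "b \<notin> sum_space A C"
    have "adjoin C b = C"
      using maximal[OF subspace_adjoin[OF C(1)] adjoin_least[OF B C(2) \<open>b \<in> B\<close>]
          Int_adjoin_trivial[OF A C(1,3) b] adjoin_upper] .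
    then have "b \<in> C" using adjoin_vector[OF C(1)] by blast
    with b show False using sum_space_upper2[OF A] by blast
  qed
  then have "sum_space A C = B"
    using sum_space_least[OF B \<open>A \<subseteq> B\<close> C(2)] by blast
  with C show thesis by (rule that)
qed

lemma coset_self: "subspace sm X \<Longrightarrow> v \<in> coset v X"
  unfolding coset_def using subspace_0 by force

lemma coset_eqI:
  assumes X: "subspace sm X" and "v - w \<in> X"
  shows "coset v X = coset w X"
proof -
  have "coset v X \<subseteq> coset w X" if "v - w \<in> X" for v w
  proof
    fix z assume "z \<in> coset v X"
    then obtain x where "z = w + ((v - w) + x)" "x \<in> X" unfolding coset_def by auto
    with that show "z \<in> coset w X" unfolding coset_def using subspace_add[OF X] by blast
  qed
  moreover have "w - v \<in> X" using subspace_neg[OF X \<open>v - w \<in> X\<close>] by simp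
  ultimately show ?thesis using \<open>v - w \<in> X\<close> by blast
qed

lemma coset_eqD:
  assumes "subspace sm X" and "coset v X = coset w X"
  shows "v - w \<in> X"
proof -
  have "v \<in> coset w X" using coset_self[OF assms(1), of v] assms(2) by simp
  then show ?thesis unfolding coset_def by auto
qed

lemma Grass_subspace: "X \<in> Grass sm \<Longrightarrow> subspace sm X"
  unfolding Grass_def by blast

text \<open>An \<open>X \<in> Grass sm\<close> is neither a line nor a hyperplane, since otherwise \<open>V/X\<close>
  or \<open>X\<close> would be a line, and \<open>V\<close> would be spanned by two vectors.\<close>

lemma Grass_not_line:
  assumes d: "dim_gt_2 sm" and G: "X \<in> Grass sm"
  shows "X \<noteq> adjoin {0} x"
proof
  assume Xx: "X = adjoin {0} x"
  have X: "subspace sm X" using Grass_subspace[OF G] .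
  obtain f where bij: "bij_betw f X {coset v X | v. True}"
    and f_smult: "\<forall>a. \<forall>x\<in>X. \<forall>u\<in>f x. f (sm a x) = coset (sm a u) X"
    using G unfolding Grass_def iso_quot_def by blast
  have x: "x \<in> X" using Xx adjoin_vector[OF subspace_zero_space] by blast
  then obtain u where u: "f x = coset u X" using bij_betwE[OF bij] by blast
  have "\<exists>a b. v = sm a u + sm b x" for v
  proof -
    have "coset v X \<in> f ` X" using bij unfolding bij_betw_def by blast
    then obtain a where "coset v X = f (sm a x)"
      using Xx unfolding adjoin_def by auto
    then have "v - sm a u \<in> X"
      using f_smult x u coset_self[OF X] coset_eqD[OF X] by simp
    then obtain b where "v - sm a u = sm b x" using Xx unfolding adjoin_def by auto
    then show ?thesis by (metis diff_add_cancel add.commute)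
  qed
  then show False using dim_gt_2_not_spanned_by_two[OF d] by blast
qed

lemma Grass_not_hyperplane:
  assumes d: "dim_gt_2 sm" and G: "X \<in> Grass sm"
  shows "adjoin X y \<noteq> UNIV"
proof
  assume U: "adjoin X y = UNIV"
  have X: "subspace sm X" using Grass_subspace[OF G] .
  obtain f where bij: "bij_betw f X {coset v X | v. True}"
    and f_smult: "\<forall>a. \<forall>x\<in>X. \<forall>u\<in>f x. f (sm a x) = coset (sm a u) X"
    using G unfolding Grass_def iso_quot_def by blast
  have "coset y X \<in> f ` X" using bij unfolding bij_betw_def by blast
  then obtain x0 where x0: "x0 \<in> X" "f x0 = coset y X" by (metis imageE)
  have "x \<in> adjoin {0} x0" if x: "x \<in> X" for x
  proof -
    obtain v where fx: "f x = coset v X" using bij_betwE[OF bij] x by blast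
    obtain x' a where "v = x' + sm a y" "x' \<in> X"
      using U unfolding adjoin_def by blast
    then have "coset v X = coset (sm a y) X" by (intro coset_eqI[OF X]) simp
    moreover have "f (sm a x0) = coset (sm a y) X"
      using f_smult x0 coset_self[OF X] by simp
    ultimately have "f x = f (sm a x0)" using fx by simp
    moreover have "inj_on f X" using bij unfolding bij_betw_def by blast
    ultimately have "x = sm a x0"
      using x subspace_smult[OF X x0(1)] by (simp add: inj_on_eq_iff)
    then show ?thesis using adjoin_memI[of 0 "{0}" a x0] by simp
  qed
  then have "X = adjoin {0} x0"
    using adjoin_least[OF X _ x0(1)] subspace_0[OF X] by blast
  then show False using Grass_not_line[OF d G] by blast
qed

subsection \<open>Invariance of the Grassmannian under linear automorphisms\<close>

lemma subspace_linear_image: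
  assumes add: "\<And>x y. T (x + y) = T x + T y" and smult: "\<And>a x. T (sm a x) = sm a (T x)"
    and X: "subspace sm X"
  shows "subspace sm (T ` X)"
  unfolding subspace_def
proof (intro conjI ballI allI)
  have "T 0 = 0" using add[of 0 0] by simp
  then show "0 \<in> T ` X" using subspace_0[OF X] by force
next
  fix x y assume "x \<in> T ` X" "y \<in> T ` X"
  then obtain x' y' where "x = T x'" "y = T y'" "x' \<in> X" "y' \<in> X" by blast
  then show "x + y \<in> T ` X" using subspace_add[OF X] add[of x' y'] by (metis image_eqI)
next
  fix a x assume "x \<in> T ` X"
  then obtain x' where "x = T x'" "x' \<in> X" by blast
  then show "sm a x \<in> T ` X" using subspace_smult[OF X] smult[of a x'] by (metis image_eqI)
qed

lemma Grass_linear_image: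
  assumes add: "\<And>x y. T (x + y) = T x + T y" and smult: "\<And>a x. T (sm a x) = sm a (T x)"
    and "bij T" and G: "X \<in> Grass sm"
  shows "T ` X \<in> Grass sm"
proof -
  have X: "subspace sm X" using Grass_subspace[OF G] .
  obtain f where bij: "bij_betw f X {coset v X | v. True}"
    and f_add: "\<forall>x\<in>X. \<forall>y\<in>X. \<forall>u\<in>f x. \<forall>w\<in>f y. f (x + y) = coset (u + w) X"
    and f_smult: "\<forall>a. \<forall>x\<in>X. \<forall>u\<in>f x. f (sm a x) = coset (sm a u) X"
    using G unfolding Grass_def iso_quot_def by blast
  define g where "g y = T ` f (inv T y)" for y
  have gT: "g (T x) = T ` f x" for x
    unfolding g_def using \<open>bij T\<close> by (simp add: bij_is_inj)
  have "\<forall>x\<in>T ` X. \<forall>y\<in>T ` X. \<forall>u\<in>g x. \<forall>w\<in>g y. g (x + y) = coset (u + w) (T ` X)"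
  proof (intro ballI)
    fix y1 y2 u w assume "y1 \<in> T ` X" "y2 \<in> T ` X" "u \<in> g y1" "w \<in> g y2"
    then obtain x1 x2 u' w' where x: "y1 = T x1" "y2 = T x2" "x1 \<in> X" "x2 \<in> X"
      "u = T u'" "w = T w'" "u' \<in> f x1" "w' \<in> f x2"
      using gT by auto
    have "g (y1 + y2) = T ` f (x1 + x2)" by (simp only: x add[symmetric] gT)
    also have "\<dots> = coset (u + w) (T ` X)" using f_add x coset_linear_image[OF add] add by simp
    finally show "g (y1 + y2) = coset (u + w) (T ` X)" .
  qed
  moreover have "\<forall>a. \<forall>x\<in>T ` X. \<forall>u\<in>g x. g (sm a x) = coset (sm a u) (T ` X)"
  proof (intro allI ballI)
    fix a y u assume "y \<in> T ` X" "u \<in> g y"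
    then obtain x u' where x: "y = T x" "x \<in> X" "u = T u'" "u' \<in> f x"
      using gT by auto
    have "g (sm a y) = T ` f (sm a x)" by (simp only: x smult[symmetric] gT)
    also have "\<dots> = coset (sm a u) (T ` X)" using f_smult x coset_linear_image[OF add] smult by simp
    finally show "g (sm a y) = coset (sm a u) (T ` X)" .
  qed
  moreover have "bij_betw g (T ` X) {coset v (T ` X) | v. True}"
    unfolding g_def using bij_betw_cosets_linear_image[OF add \<open>bij T\<close> bij] .
  ultimately have "iso_quot sm (T ` X)"
    unfolding iso_quot_def by blast
  then show ?thesis
    unfolding Grass_def using subspace_linear_image[OF add smult X] by blast
qed

lemma independent_mod_subspace:
  assumes S: "subspace sm S" and a: "a \<notin> S" and b: "b \<notin> adjoin S a"
    and "sm \<gamma> a + sm \<delta> b \<in> S"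
  shows "\<gamma> = 0 \<and> \<delta> = 0"
proof -
  define s where "s = sm \<gamma> a + sm \<delta> b"
  have "s \<in> S" unfolding s_def by fact
  have \<delta>b: "sm \<delta> b = s + sm (- \<gamma>) a"
    unfolding s_def by (simp add: smult_minus_left)
  have "\<delta> = 0"
  proof (rule ccontr)
    assume "\<delta> \<noteq> 0"
    then have "b = sm (inverse \<delta>) (s + sm (- \<gamma>) a)"
      by (simp flip: \<delta>b add: smult_inverse_cancel)
    then show False
      using b subspace_smult[OF subspace_adjoin[OF S]] adjoin_memI[OF \<open>s \<in> S\<close>] by metis
  qed
  moreover have "\<gamma> = 0"
  proof (rule ccontr)
    assume "\<gamma> \<noteq> 0"
    then have "a = sm (inverse \<gamma>) s"
      unfolding s_def using \<open>\<delta> = 0\<close> by (simp add: smult_inverse_cancel)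
    then show False using a subspace_smult[OF S \<open>s \<in> S\<close>] by simp
  qed
  ultimately show ?thesis by blast
qed

lemma exists_codim2_complement:
  assumes S: "subspace sm S" and a: "a \<notin> S" and b: "b \<notin> adjoin S a"
  obtains R where "subspace sm R" "S \<subseteq> R"
    and "\<And>v. \<exists>\<alpha> \<beta>. v - sm \<alpha> a - sm \<beta> b \<in> R"
    and "\<And>\<gamma> \<delta>. sm \<gamma> a + sm \<delta> b \<in> R \<Longrightarrow> \<gamma> = 0 \<and> \<delta> = 0"
proof -
  define P where "P = adjoin (adjoin S a) b"
  have P: "subspace sm P" unfolding P_def using subspace_adjoin S by blast
  obtain C where C: "subspace sm C" "C \<subseteq> UNIV" "P \<inter> C = {0}" "sum_space P C = UNIV"
    by (rule exists_complement[OF P subspace_UNIV subset_UNIV])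
  define R where "R = sum_space S C"
  have R: "subspace sm R" unfolding R_def using subspace_sum_space S C by blast
  have SP: "S \<subseteq> P" and aP: "a \<in> P" and bP: "b \<in> P"
    unfolding P_def using adjoin_upper adjoin_vector[OF S] adjoin_vector[OF subspace_adjoin[OF S]]
    by blast+
  show thesis
  proof (rule that[OF R])
    show "S \<subseteq> R" unfolding R_def using sum_space_upper1[OF C(1)] .
  next
    fix v
    obtain p c where "v = p + c" "p \<in> P" "c \<in> C" using C(4) unfolding sum_space_def by blast
    moreover from \<open>p \<in> P\<close> obtain s \<alpha> \<beta> where "p = s + sm \<alpha> a + sm \<beta> b" "s \<in> S"
      unfolding P_def adjoin_def by blast
    ultimately have "v - sm \<alpha> a - sm \<beta> b = s + c" by (simp add: algebra_simps)
    with \<open>s \<in> S\<close> \<open>c \<in> C\<close> show "\<exists>\<alpha> \<beta>. v - sm \<alpha> a - sm \<beta> b \<in> R"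
      unfolding R_def sum_space_def by blast
  next
    fix \<gamma> \<delta> assume "sm \<gamma> a + sm \<delta> b \<in> R"
    then obtain s c where sc: "sm \<gamma> a + sm \<delta> b = s + c" "s \<in> S" "c \<in> C"
      unfolding R_def sum_space_def by blast
    have "c = (sm \<gamma> a + sm \<delta> b) - s" using sc by (simp add: algebra_simps)
    moreover have "sm \<gamma> a + sm \<delta> b \<in> P"
      using subspace_add[OF P] subspace_smult[OF P] aP bP by blast
    ultimately have "c \<in> P"
      using subspace_diff[OF P] SP sc(2) by blast
    then have "c = 0" using C(3) sc(3) by blast
    with sc have "sm \<gamma> a + sm \<delta> b \<in> S" by simp
    then show "\<gamma> = 0 \<and> \<delta> = 0" by (rule independent_mod_subspace[OF S a b])
  qed
qed

lemma exists_coordinates: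
  assumes S: "subspace sm S" and a: "a \<notin> S" and b: "b \<notin> adjoin S a"
  obtains R \<alpha> \<beta> where "subspace sm R" "S \<subseteq> R"
    and "\<And>v. v - sm (\<alpha> v) a - sm (\<beta> v) b \<in> R"
    and "\<And>v x y. v - sm x a - sm y b \<in> R \<Longrightarrow> \<alpha> v = x \<and> \<beta> v = y"
proof -
  obtain R where R: "subspace sm R" "S \<subseteq> R"
    and span: "\<And>v. \<exists>\<alpha> \<beta>. v - sm \<alpha> a - sm \<beta> b \<in> R"
    and indep: "\<And>\<gamma> \<delta>. sm \<gamma> a + sm \<delta> b \<in> R \<Longrightarrow> \<gamma> = 0 \<and> \<delta> = 0"
    using exists_codim2_complement[OF S a b] by blast
  from span obtain \<alpha> \<beta> where coord: "\<And>v. v - sm (\<alpha> v) a - sm (\<beta> v) b \<in> R"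
    by metis
  have "\<alpha> v = x \<and> \<beta> v = y" if "v - sm x a - sm y b \<in> R" for v x y
  proof -
    have "(v - sm x a - sm y b) - (v - sm (\<alpha> v) a - sm (\<beta> v) b) \<in> R"
      using subspace_diff[OF R(1) that coord] .
    moreover have "(v - sm x a - sm y b) - (v - sm (\<alpha> v) a - sm (\<beta> v) b) =
        sm (\<alpha> v - x) a + sm (\<beta> v - y) b"
      by (simp add: smult_diff_left algebra_simps)
    ultimately show ?thesis using indep by fastforce
  qed
  with R coord show thesis by (rule that)
qed

lemma coordinates_linear:
  assumes R: "subspace sm R"
    and coord: "\<And>v. v - sm (\<alpha> v) a - sm (\<beta> v) b \<in> R"
    and unique: "\<And>v x y. v - sm x a - sm y b \<in> R \<Longrightarrow> \<alpha> v = x \<and> \<beta> v = y"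
  shows "\<alpha> (x + y) = \<alpha> x + \<alpha> y \<and> \<beta> (x + y) = \<beta> x + \<beta> y"
    and "\<alpha> (sm c x) = c * \<alpha> x \<and> \<beta> (sm c x) = c * \<beta> x"
proof (rule unique)
  have "(x + y) - sm (\<alpha> x + \<alpha> y) a - sm (\<beta> x + \<beta> y) b =
      (x - sm (\<alpha> x) a - sm (\<beta> x) b) + (y - sm (\<alpha> y) a - sm (\<beta> y) b)"
    by (simp add: smult_add_left algebra_simps)
  then show "(x + y) - sm (\<alpha> x + \<alpha> y) a - sm (\<beta> x + \<beta> y) b \<in> R"
    using subspace_add[OF R coord coord] by metis
next
  have "sm c x - sm (c * \<alpha> x) a - sm (c * \<beta> x) b = sm c (x - sm (\<alpha> x) a - sm (\<beta> x) b)"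
    by (simp add: smult_diff_right smult_assoc)
  then show "\<alpha> (sm c x) = c * \<alpha> x \<and> \<beta> (sm c x) = c * \<beta> x"
    using subspace_smult[OF R coord] unique by metis
qed

text \<open>The linear map exchanging the coordinates of \<open>a\<close> and \<open>b\<close> with respect to
  \<open>V = R \<oplus> Ka \<oplus> Kb\<close>; it is an involution fixing \<open>R \<supseteq> S\<close>.\<close>

lemma exists_swap_automorphism:
  assumes S: "subspace sm S" and a: "a \<notin> S" and b: "b \<notin> adjoin S a"
  obtains T where "\<And>x y. T (x + y) = T x + T y" "\<And>c x. T (sm c x) = sm c (T x)"
    and "bij T" and "T ` adjoin S a = adjoin S b"
proof -
  obtain R \<alpha> \<beta> where R: "subspace sm R" "S \<subseteq> R"
    and coord: "\<And>v. v - sm (\<alpha> v) a - sm (\<beta> v) b \<in> R"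
    and unique: "\<And>v x y. v - sm x a - sm y b \<in> R \<Longrightarrow> \<alpha> v = x \<and> \<beta> v = y"
    using exists_coordinates[OF S a b] by blast
  define T where "T v = v + sm (\<alpha> v - \<beta> v) (b - a)" for v
  note linear = coordinates_linear[OF R(1) coord unique]
  from linear(1) have "\<alpha> (x + y) - \<beta> (x + y) = (\<alpha> x - \<beta> x) + (\<alpha> y - \<beta> y)" for x y
    by (simp add: algebra_simps)
  then have T_add: "T (x + y) = T x + T y" for x y
    unfolding T_def by (simp only: smult_add_left) (simp add: algebra_simps)
  from linear(2) have T_smult: "T (sm c x) = sm c (T x)" for c x
    unfolding T_def by (simp add: smult_add_right flip: smult_assoc right_diff_distrib)
  have "\<alpha> (T x) = \<beta> x \<and> \<beta> (T x) = \<alpha> x" for x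
  proof (rule unique)
    have "T x - sm (\<beta> x) a - sm (\<alpha> x) b = x - sm (\<alpha> x) a - sm (\<beta> x) b"
      unfolding T_def by (simp add: smult_diff_right smult_diff_left algebra_simps)
    then show "T x - sm (\<beta> x) a - sm (\<alpha> x) b \<in> R" using coord by simp
  qed
  then have "T (T x) = x" for x
    unfolding T_def[of "T x"] by (simp add: T_def add.assoc flip: smult_add_left)
  then have "bij T" by (rule involuntory_imp_bij)
  have T_adjoin: "T (s + sm c a) = s + sm c b" if "s \<in> S" for s c
  proof -
    have "\<alpha> (s + sm c a) = c \<and> \<beta> (s + sm c a) = 0"
      using that R(2) by (intro unique) auto
    then show ?thesis unfolding T_def by (simp add: smult_diff_right algebra_simps)
  qed
  have "T ` adjoin S a = adjoin S b"
  proof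
    show "T ` adjoin S a \<subseteq> adjoin S b"
      unfolding adjoin_def using T_adjoin by auto
    show "adjoin S b \<subseteq> T ` adjoin S a"
    proof
      fix z assume "z \<in> adjoin S b"
      then obtain s c where "z = s + sm c b" "s \<in> S" unfolding adjoin_def by blast
      then have "z = T (s + sm c a)" "s + sm c a \<in> adjoin S a"
        using T_adjoin adjoin_memI by auto
      then show "z \<in> T ` adjoin S a" by blast
    qed
  qed
  with T_add T_smult \<open>bij T\<close> show thesis by (rule that)
qed

lemma Grass_adjoin_exchange:
  assumes S: "subspace sm S" and a: "a \<notin> S" and b: "b \<notin> S" and G: "adjoin S a \<in> Grass sm"
  shows "adjoin S b \<in> Grass sm"
proof (cases "b \<in> adjoin S a")
  case True
  then show ?thesis using adjoin_exchange[OF S True b] G by simp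
next
  case False
  then obtain T where "\<And>x y. T (x + y) = T x + T y" "\<And>c x. T (sm c x) = sm c (T x)"
    and "bij T" and "T ` adjoin S a = adjoin S b"
    using exists_swap_automorphism[OF S a] by blast
  with G show ?thesis using Grass_linear_image by metis
qed

lemma adjacent_sym: "adjacent sm X Y \<longleftrightarrow> adjacent sm Y X"
  using sum_space_commute[of X Y] unfolding adjacent_def by auto

lemma quot_dim1_Int_of_sum:
  assumes X: "subspace sm X" and Y: "subspace sm Y" and q: "quot_dim1 sm (sum_space X Y) X"
  shows "quot_dim1 sm Y (X \<inter> Y)"
proof -
  have "\<not> Y \<subseteq> X"
    using sum_space_absorb[OF Y X] sum_space_commute[of X Y] quot_dim1_neq[OF q] by auto
  then obtain y where y: "y \<in> Y" "y \<notin> X" by blast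
  have XY: "sum_space X Y = adjoin X y"
    using quot_dim1_eq_adjoin[OF X q _ y(2)] sum_space_upper2[OF X] y(1) by blast
  have "Y \<subseteq> adjoin (X \<inter> Y) y"
  proof
    fix y' assume "y' \<in> Y"
    then have "y' \<in> adjoin X y" using XY sum_space_upper2[OF X] by blast
    then obtain x t where xt: "y' = x + sm t y" "x \<in> X" unfolding adjoin_def by blast
    then have "x \<in> Y"
      using subspace_add_cancel_right[OF Y] \<open>y' \<in> Y\<close> subspace_smult[OF Y y(1)] by blast
    with xt show "y' \<in> adjoin (X \<inter> Y) y" using adjoin_memI by blast
  qed
  moreover have "adjoin (X \<inter> Y) y \<subseteq> Y" using adjoin_least[OF Y] y by blast
  ultimately show ?thesis
    unfolding quot_dim1_iff_adjoin using y by blast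
qed

lemma adjacent_quot_dim1_Int:
  assumes X: "subspace sm X" and Y: "subspace sm Y" and "adjacent sm X Y"
  shows "quot_dim1 sm X (X \<inter> Y)" and "quot_dim1 sm Y (X \<inter> Y)"
proof -
  show "quot_dim1 sm Y (X \<inter> Y)"
    using quot_dim1_Int_of_sum[OF X Y] \<open>adjacent sm X Y\<close> unfolding adjacent_def by blast
  have "quot_dim1 sm (sum_space Y X) Y"
    using \<open>adjacent sm X Y\<close> sum_space_commute[of X Y] unfolding adjacent_def by simp
  then show "quot_dim1 sm X (X \<inter> Y)"
    using quot_dim1_Int_of_sum[OF Y X] by (simp add: Int_commute)
qed

lemma adjacent_not_subset:
  assumes X: "subspace sm X" and Y: "subspace sm Y" and "adjacent sm X Y"
  shows "\<not> X \<subseteq> Y"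
proof
  assume "X \<subseteq> Y"
  then have "sum_space X Y = Y" using sum_space_absorb X Y by blast
  with \<open>adjacent sm X Y\<close> show False
    unfolding adjacent_def using quot_dim1_neq by force
qed

lemma adjacent_adjoin:
  assumes S: "subspace sm S" and a: "a \<notin> adjoin S b" and b: "b \<notin> adjoin S a"
  shows "adjacent sm (adjoin S a) (adjoin S b)"
proof -
  have "sum_space (adjoin S a) (adjoin S b) = adjoin (adjoin S a) b"
    by (rule sum_space_adjoin[OF subspace_adjoin[OF S] S adjoin_upper])
  moreover have "sum_space (adjoin S a) (adjoin S b) = adjoin (adjoin S b) a"
    using sum_space_commute sum_space_adjoin[OF subspace_adjoin[OF S] S adjoin_upper] by metis
  ultimately show ?thesis
    unfolding adjacent_def
    using quot_dim1_adjoin[OF subspace_adjoin[OF S] b] quot_dim1_adjoin[OF subspace_adjoin[OF S] a]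
    by simp
qed

lemma adjacent_triangle:
  assumes X: "subspace sm X" and Y: "subspace sm Y" and W: "subspace sm W"
    and "adjacent sm X Y" and "adjacent sm W X" and "adjacent sm W Y"
  shows "X \<inter> Y \<subseteq> W \<or> W \<subseteq> sum_space X Y"
proof (rule ccontr)
  assume "\<not> ?thesis"
  then obtain m where m: "m \<in> X" "m \<in> Y" "m \<notin> W" and "\<not> W \<subseteq> sum_space X Y" by blast
  have qW: "quot_dim1 sm W (W \<inter> X)"
    using adjacent_quot_dim1_Int[OF W X \<open>adjacent sm W X\<close>] by blast
  have "Y = adjoin (W \<inter> Y) m"
    using adjacent_quot_dim1_Int[OF W Y \<open>adjacent sm W Y\<close>] m
    by (intro quot_dim1_eq_adjoin[OF subspace_Int[OF W Y]]) blast+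
  moreover obtain y where y: "y \<in> Y" "y \<notin> X"
    using adjacent_not_subset[OF Y X] \<open>adjacent sm X Y\<close> adjacent_sym by blast
  ultimately obtain z t where z: "y = z + sm t m" "z \<in> W \<inter> Y" unfolding adjoin_def by blast
  then have "z \<notin> X" using y subspace_add[OF X _ subspace_smult[OF X m(1)]] by blast
  then have "W = adjoin (W \<inter> X) z"
    using quot_dim1_eq_adjoin[OF subspace_Int[OF W X] qW] z by blast
  moreover have "adjoin (W \<inter> X) z \<subseteq> sum_space X Y"
    using sum_space_upper1[OF Y] sum_space_upper2[OF X] z
    by (intro adjoin_least[OF subspace_sum_space[OF X Y]]) blast+
  ultimately show False using \<open>\<not> W \<subseteq> sum_space X Y\<close> by blast
qed

lemma quot_dim1_of_adjacent:
  assumes M: "subspace sm M" and X: "subspace sm X" and W: "subspace sm W"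
    and "adjacent sm W X" and "M \<subseteq> W" and q: "quot_dim1 sm X M"
  shows "quot_dim1 sm W M"
proof -
  have "W \<inter> X = M \<or> W \<inter> X = X"
    using quot_dim1_between[OF M subspace_Int[OF W X] q] quot_dim1_subset[OF q] \<open>M \<subseteq> W\<close>
    by blast
  moreover have "\<not> X \<subseteq> W"
    using adjacent_not_subset[OF X W] \<open>adjacent sm W X\<close> adjacent_sym by blast
  ultimately show ?thesis
    using adjacent_quot_dim1_Int(1)[OF W X \<open>adjacent sm W X\<close>] by auto
qed

subsection \<open>Intervals of codimension two\<close>

definition quot_dim2 :: "'v set \<Rightarrow> 'v set \<Rightarrow> bool" where
  "quot_dim2 N M \<longleftrightarrow> subspace sm M \<and> subspace sm N \<and>
     (\<exists>X. subspace sm X \<and> quot_dim1 sm X M \<and> quot_dim1 sm N X)"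

lemma quot_dim2_between:
  assumes "quot_dim2 N M" and A: "subspace sm A" and "M \<subset> A" and "A \<subset> N"
  shows "quot_dim1 sm A M" and "quot_dim1 sm N A"
proof -
  obtain X where M: "subspace sm M" and X: "subspace sm X"
    and q1: "quot_dim1 sm X M" and q2: "quot_dim1 sm N X"
    using \<open>quot_dim2 N M\<close> unfolding quot_dim2_def by blast
  obtain c where c: "c \<in> A" "c \<notin> M" using \<open>M \<subset> A\<close> by blast
  have "quot_dim1 sm A M \<and> quot_dim1 sm N A"
  proof (cases "c \<in> X")
    case True
    then have "X \<subseteq> A"
      using quot_dim1_eq_adjoin[OF M q1 _ c(2)] adjoin_least[OF A] \<open>M \<subset> A\<close> c(1) by blast
    then have "A = X"
      using quot_dim1_between[OF X A q2] \<open>A \<subset> N\<close> by blast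
    then show ?thesis using q1 q2 by simp
  next
    case False
    \<comment> \<open>then \<open>A\<close> is the other point \<open>M + Kc\<close> of the interval\<close>
    obtain a where a: "a \<in> X" "a \<notin> M" "X = adjoin M a"
      using q1 unfolding quot_dim1_iff_adjoin by blast
    have "a \<notin> adjoin M c"
      using not_in_adjoin[OF M X quot_dim1_subset[OF q1] a(1,2) False] .
    moreover have "N = adjoin (adjoin M c) a"
      using quot_dim1_eq_adjoin[OF X q2 _ False] c(1) \<open>A \<subset> N\<close> a(3) adjoin_commute[OF M]
      by blast
    ultimately have qN: "quot_dim1 sm N (adjoin M c)"
      using quot_dim1_adjoin[OF subspace_adjoin[OF M]] by simp
    have "adjoin M c \<subseteq> A" using adjoin_least[OF A] \<open>M \<subset> A\<close> c by blast
    then have "A = adjoin M c"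
      using quot_dim1_between[OF subspace_adjoin[OF M] A qN] \<open>A \<subset> N\<close> by blast
    then show ?thesis using qN quot_dim1_adjoin[OF M c(2)] by simp
  qed
  then show "quot_dim1 sm A M" and "quot_dim1 sm N A" by blast+
qed

lemma quot_dim2_adjacent:
  assumes "quot_dim2 N M" and A: "subspace sm A" and B: "subspace sm B"
    and "M \<subset> A" "A \<subset> N" "M \<subset> B" "B \<subset> N" "A \<noteq> B"
  shows "adjacent sm A B" and "A \<inter> B = M" and "sum_space A B = N"
proof -
  have M: "subspace sm M" and N: "subspace sm N"
    using \<open>quot_dim2 N M\<close> unfolding quot_dim2_def by auto
  have qA: "quot_dim1 sm A M" "quot_dim1 sm N A"
    using quot_dim2_between[OF \<open>quot_dim2 N M\<close> A] assms by blast+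
  have qB: "quot_dim1 sm B M" "quot_dim1 sm N B"
    using quot_dim2_between[OF \<open>quot_dim2 N M\<close> B] assms by blast+
  have "\<not> A \<subseteq> B"
    using quot_dim1_between[OF M A qB(1)] assms by blast
  moreover have "\<not> B \<subseteq> A"
    using quot_dim1_between[OF M B qA(1)] assms by blast
  moreover have "M \<subseteq> A \<inter> B" using assms by blast
  ultimately show "A \<inter> B = M"
    using quot_dim1_between[OF M subspace_Int[OF A B] qA(1)] by blast
  have "A \<subseteq> sum_space A B" "sum_space A B \<subseteq> N"
    using sum_space_upper1[OF B] sum_space_least[OF N] assms by blast+
  moreover have "sum_space A B \<noteq> A"
    using sum_space_upper2[OF A, of B] \<open>\<not> B \<subseteq> A\<close> by blast
  ultimately show "sum_space A B = N"
    using quot_dim1_between[OF A subspace_sum_space[OF A B] qA(2)] by blast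
  then show "adjacent sm A B"
    unfolding adjacent_def using qA(2) qB(2) by simp
qed

lemma quot_dim2_of_adjacent:
  assumes X: "subspace sm X" and Y: "subspace sm Y" and "adjacent sm X Y"
  shows "quot_dim2 (sum_space X Y) (X \<inter> Y)"
    and "X \<inter> Y \<subset> X" "X \<subset> sum_space X Y" "X \<inter> Y \<subset> Y" "Y \<subset> sum_space X Y"
proof -
  have q: "quot_dim1 sm X (X \<inter> Y)" "quot_dim1 sm Y (X \<inter> Y)"
    using adjacent_quot_dim1_Int[OF X Y \<open>adjacent sm X Y\<close>] by blast+
  have q': "quot_dim1 sm (sum_space X Y) X" "quot_dim1 sm (sum_space X Y) Y"
    using \<open>adjacent sm X Y\<close> unfolding adjacent_def by blast+
  show "quot_dim2 (sum_space X Y) (X \<inter> Y)"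
    unfolding quot_dim2_def
    using subspace_Int[OF X Y] subspace_sum_space[OF X Y] X q(1) q'(1) by blast
  show "X \<inter> Y \<subset> X" "X \<inter> Y \<subset> Y" "X \<subset> sum_space X Y" "Y \<subset> sum_space X Y"
    using q q' quot_dim1_psubset by blast+
qed

subsection \<open>Pencils as lines of the Grassmann graph\<close>

definition adjacent_or_eq :: "'v set \<Rightarrow> 'v set \<Rightarrow> bool" where
  "adjacent_or_eq W X \<longleftrightarrow> W = X \<or> adjacent sm W X"

definition adjacency_line :: "'v set \<Rightarrow> 'v set \<Rightarrow> 'v set set" where
  "adjacency_line X Y = {Z \<in> Grass sm. \<forall>W\<in>Grass sm.
     adjacent_or_eq W X \<and> adjacent_or_eq W Y \<longrightarrow> adjacent_or_eq W Z}"

lemma adjacent_or_eq_of_quot_dim2: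
  assumes "quot_dim2 N M" and "subspace sm A" "subspace sm B"
    and "M \<subset> A" "A \<subset> N" "M \<subset> B" "B \<subset> N"
  shows "adjacent_or_eq A B"
  unfolding adjacent_or_eq_def using quot_dim2_adjacent(1)[OF assms] by blast

lemma adjacent_or_eq_above_bottom:
  assumes p: "quot_dim2 N M" and W: "subspace sm W" and X: "subspace sm X" and Z: "subspace sm Z"
    and X_between: "M \<subset> X" "X \<subset> N" and Z_between: "M \<subset> Z" "Z \<subset> N"
    and "adjacent sm W X" and "M \<subseteq> W"
  shows "adjacent_or_eq W Z"
proof (cases "W \<subseteq> N")
  case True
  moreover have "\<not> W \<subseteq> X" "\<not> X \<subseteq> W"
    using adjacent_not_subset[OF W X] adjacent_not_subset[OF X W] \<open>adjacent sm W X\<close> adjacent_sym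
    by blast+
  ultimately have "M \<subset> W" "W \<subset> N" using \<open>M \<subseteq> W\<close> X_between by blast+
  with adjacent_or_eq_of_quot_dim2[OF p W Z] Z_between show ?thesis by blast
next
  case False
  then obtain w where w: "w \<in> W" "w \<notin> N" by blast
  obtain z where z: "z \<in> Z" "z \<notin> M" using Z_between by blast
  have M: "subspace sm M" and N: "subspace sm N" using p unfolding quot_dim2_def by blast+
  have "W = adjoin M w"
    using quot_dim1_of_adjacent[OF M X W \<open>adjacent sm W X\<close> \<open>M \<subseteq> W\<close>]
      quot_dim2_between[OF p X X_between] quot_dim1_eq_adjoin[OF M] w X_between by blast
  moreover have "Z = adjoin M z"
    using quot_dim2_between[OF p Z Z_between] quot_dim1_eq_adjoin[OF M] z by blast
  moreover have "w \<notin> adjoin M z" using w Z_between calculation(2) by blast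
  moreover have "z \<notin> adjoin M w"
    using not_in_adjoin[OF M N _ _ z(2) w(2)] z(1) Z_between by blast
  ultimately show ?thesis
    unfolding adjacent_or_eq_def using adjacent_adjoin[OF M] by simp
qed

lemma adjacent_below_top:
  assumes p: "quot_dim2 N M" and W: "subspace sm W" and X: "subspace sm X" and Z: "subspace sm Z"
    and X_between: "M \<subset> X" "X \<subset> N" and Z_between: "M \<subset> Z" "Z \<subset> N"
    and "adjacent sm W X" and "W \<subseteq> N" and "\<not> M \<subseteq> W"
  shows "adjacent sm W Z"
proof -
  have N: "subspace sm N" using p unfolding quot_dim2_def by blast
  have "sum_space W X = N"
    using quot_dim1_between[OF X subspace_sum_space[OF W X] quot_dim2_between(2)[OF p X X_between]]
      sum_space_upper1[OF X, of W] sum_space_upper2[OF W, of X] sum_space_least[OF N]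
      adjacent_not_subset[OF W X \<open>adjacent sm W X\<close>] \<open>W \<subseteq> N\<close> X_between
    by blast
  then have qW: "quot_dim1 sm N W" using \<open>adjacent sm W X\<close> unfolding adjacent_def by simp
  have "\<not> W \<subseteq> Z"
    using quot_dim1_between[OF W Z qW] Z_between \<open>\<not> M \<subseteq> W\<close> by blast
  then have "sum_space W Z = N"
    using quot_dim1_between[OF Z subspace_sum_space[OF W Z] quot_dim2_between(2)[OF p Z Z_between]]
      sum_space_upper1[OF Z, of W] sum_space_upper2[OF W, of Z] sum_space_least[OF N]
      \<open>W \<subseteq> N\<close> Z_between
    by blast
  then show ?thesis
    unfolding adjacent_def using qW quot_dim2_between(2)[OF p Z Z_between] by simp
qed

lemma pencil_set_subset_adjacency_line:
  assumes X: "subspace sm X" and Y: "subspace sm Y" and "adjacent sm X Y"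
  shows "pencil_set sm (X \<inter> Y) (sum_space X Y) \<subseteq> adjacency_line X Y"
proof
  fix Z assume "Z \<in> pencil_set sm (X \<inter> Y) (sum_space X Y)"
  then have ZG: "Z \<in> Grass sm" and Z_between: "X \<inter> Y \<subset> Z" "Z \<subset> sum_space X Y"
    unfolding pencil_set_def by blast+
  note Z = Grass_subspace[OF ZG]
  note p = quot_dim2_of_adjacent[OF X Y \<open>adjacent sm X Y\<close>]
  have "adjacent_or_eq W Z"
    if W: "subspace sm W" "adjacent_or_eq W X" "adjacent_or_eq W Y" for W
  proof (cases "W = X \<or> W = Y")
    case True
    then show ?thesis
      using adjacent_or_eq_of_quot_dim2[OF p(1) _ Z _ _ Z_between] X Y p by blast
  next
    case False
    then have "adjacent sm W X" "adjacent sm W Y"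
      using W unfolding adjacent_or_eq_def by blast+
    then have "X \<inter> Y \<subseteq> W \<or> W \<subseteq> sum_space X Y"
      using adjacent_triangle[OF X Y W(1) \<open>adjacent sm X Y\<close>] by blast
    then show ?thesis
      using adjacent_or_eq_above_bottom[OF p(1) W(1) X Z p(2,3) Z_between \<open>adjacent sm W X\<close>]
        adjacent_below_top[OF p(1) W(1) X Z p(2,3) Z_between \<open>adjacent sm W X\<close>]
      unfolding adjacent_or_eq_def by blast
  qed
  with ZG show "Z \<in> adjacency_line X Y"
    unfolding adjacency_line_def using Grass_subspace by blast
qed

lemma exists_adjoin_complement:
  assumes M: "subspace sm M" and "m \<in> M" and "m \<noteq> 0"
  obtains M' where "subspace sm M'" "M' \<subseteq> M" "m \<notin> M'" "M = adjoin M' m"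
proof -
  have L: "subspace sm (adjoin {0} m)" using subspace_adjoin[OF subspace_zero_space] .
  have "adjoin {0} m \<subseteq> M" using adjoin_least[OF M] subspace_0[OF M] \<open>m \<in> M\<close> by blast
  then obtain M' where M': "subspace sm M'" "M' \<subseteq> M" "adjoin {0} m \<inter> M' = {0}"
    "sum_space (adjoin {0} m) M' = M"
    using exists_complement[OF L M] by blast
  have "m \<notin> M'" using M'(3) adjoin_vector[OF subspace_zero_space, of m] \<open>m \<noteq> 0\<close> by blast
  moreover have "M = adjoin M' m"
    using M'(4) sum_space_commute sum_space_adjoin[OF M'(1) subspace_zero_space, of m]
      subspace_0[OF M'(1)] by auto
  ultimately show thesis using M' that by blast
qed

text \<open>The two kinds of neighbours of an adjacent pair \<open>X, Y\<close> that lie outside the pencil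
  through \<open>X, Y\<close>: one avoiding a given vector of \<open>X \<inter> Y\<close> inside \<open>X + Y\<close>, and one containing
  \<open>X \<inter> Y\<close> and a given vector outside \<open>X + Y\<close>.\<close>

lemma exists_common_neighbour_avoiding:
  assumes XG: "X \<in> Grass sm" and YG: "Y \<in> Grass sm" and "adjacent sm X Y"
    and m: "m \<in> X \<inter> Y" "m \<noteq> 0"
  obtains W where "W \<in> Grass sm" "adjacent sm W X" "adjacent sm W Y"
    "W \<subseteq> sum_space X Y" "m \<notin> W"
proof -
  note X = Grass_subspace[OF XG] and Y = Grass_subspace[OF YG]
  define M where "M = X \<inter> Y"
  note M = subspace_Int[OF X Y, folded M_def]
  note q = adjacent_quot_dim1_Int[OF X Y \<open>adjacent sm X Y\<close>, folded M_def]
  obtain x where x: "x \<in> X" "x \<notin> Y" using adjacent_not_subset[OF X Y \<open>adjacent sm X Y\<close>] by blast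
  obtain y where y: "y \<in> Y" "y \<notin> X"
    using adjacent_not_subset[OF Y X] \<open>adjacent sm X Y\<close> adjacent_sym by blast
  obtain M' where M': "subspace sm M'" "M' \<subseteq> M" "m \<notin> M'" "M = adjoin M' m"
    using exists_adjoin_complement[OF M] m unfolding M_def by blast
  have Xe: "X = adjoin (adjoin M' x) m" and Ye: "Y = adjoin (adjoin M' y) m"
    using quot_dim1_eq_adjoin[OF M q(1) x(1)] quot_dim1_eq_adjoin[OF M q(2) y(1)] x(2) y(2)
      adjoin_commute[OF M'(1)] M'(4) unfolding M_def by auto
  define W where "W = adjoin (adjoin M' x) y"
  have We: "W = adjoin (adjoin M' y) x" unfolding W_def using adjoin_commute[OF M'(1)] .
  have subX: "adjoin M' x \<subseteq> X" and subY: "adjoin M' y \<subseteq> Y"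
    using Xe Ye adjoin_upper by blast+
  have mX: "m \<notin> adjoin M' x" and mY: "m \<notin> adjoin M' y"
    using not_in_adjoin[OF M'(1) M M'(2)] m(1) M'(3) x(2) y(2) unfolding M_def by blast+
  have mW: "m \<notin> W"
    using not_in_adjoin[OF subspace_adjoin[OF M'(1)] X subX _ mX y(2)] m(1) unfolding W_def by blast
  show thesis
  proof (rule that)
    show "W \<in> Grass sm"
      unfolding W_def using Grass_adjoin_exchange[OF subspace_adjoin[OF M'(1)] mX] subX y(2) Xe XG
      by blast
    have "y \<notin> adjoin (adjoin M' x) m" using y(2) Xe by simp
    then show "adjacent sm W X"
      unfolding W_def Xe using mW[unfolded W_def] by (intro adjacent_adjoin[OF subspace_adjoin[OF M'(1)]]) simp
    have "x \<notin> adjoin (adjoin M' y) m" using x(2) Ye by simp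
    then show "adjacent sm W Y"
      unfolding We Ye using mW[unfolded We] by (intro adjacent_adjoin[OF subspace_adjoin[OF M'(1)]]) simp
    have "adjoin M' x \<subseteq> sum_space X Y"
      using subX sum_space_upper1[OF Y] by (rule subset_trans)
    moreover have "y \<in> sum_space X Y" using sum_space_upper2[OF X] y(1) by blast
    ultimately show "W \<subseteq> sum_space X Y"
      unfolding W_def by (rule adjoin_least[OF subspace_sum_space[OF X Y]])
    show "m \<notin> W" by (rule mW)
  qed
qed

lemma exists_common_neighbour_containing:
  assumes XG: "X \<in> Grass sm" and YG: "Y \<in> Grass sm" and "adjacent sm X Y"
    and w: "w \<notin> sum_space X Y"
  shows "adjoin (X \<inter> Y) w \<in> Grass sm" "adjacent sm (adjoin (X \<inter> Y) w) X"
    "adjacent sm (adjoin (X \<inter> Y) w) Y"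
proof -
  note X = Grass_subspace[OF XG] and Y = Grass_subspace[OF YG]
  define M where "M = X \<inter> Y"
  note M = subspace_Int[OF X Y, folded M_def]
  note N = subspace_sum_space[OF X Y]
  note q = adjacent_quot_dim1_Int[OF X Y \<open>adjacent sm X Y\<close>, folded M_def]
  obtain x where x: "x \<in> X" "x \<notin> Y" using adjacent_not_subset[OF X Y \<open>adjacent sm X Y\<close>] by blast
  obtain y where y: "y \<in> Y" "y \<notin> X"
    using adjacent_not_subset[OF Y X] \<open>adjacent sm X Y\<close> adjacent_sym by blast
  have Xe: "X = adjoin M x" and Ye: "Y = adjoin M y"
    using quot_dim1_eq_adjoin[OF M q(1) x(1)] quot_dim1_eq_adjoin[OF M q(2) y(1)] x(2) y(2)
    unfolding M_def by auto
  have XN: "X \<subseteq> sum_space X Y" and YN: "Y \<subseteq> sum_space X Y"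
    using sum_space_upper1[OF Y] sum_space_upper2[OF X] .
  have MN: "M \<subseteq> sum_space X Y" unfolding M_def using XN by blast
  have wM: "w \<notin> M" using w MN by blast
  have xM: "x \<notin> M" and yM: "y \<notin> M" using x(2) y(2) unfolding M_def by blast+
  have "adjoin M w \<in> Grass sm"
    using Grass_adjoin_exchange[OF M xM wM] XG[unfolded Xe] .
  moreover have "adjacent sm (adjoin M w) X"
    unfolding Xe using not_in_adjoin[OF M N MN _ xM w] x(1) XN w Xe
    by (intro adjacent_adjoin[OF M]) auto
  moreover have "adjacent sm (adjoin M w) Y"
    unfolding Ye using not_in_adjoin[OF M N MN _ yM w] y(1) YN w Ye
    by (intro adjacent_adjoin[OF M]) auto
  ultimately show "adjoin (X \<inter> Y) w \<in> Grass sm" "adjacent sm (adjoin (X \<inter> Y) w) X"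
    "adjacent sm (adjoin (X \<inter> Y) w) Y"
    unfolding M_def by blast+
qed

lemma adjacency_line_Int_subset:
  assumes d: "dim_gt_2 sm" and XG: "X \<in> Grass sm" and YG: "Y \<in> Grass sm"
    and "adjacent sm X Y" and Z: "Z \<in> adjacency_line X Y" and "Z \<subseteq> sum_space X Y"
  shows "X \<inter> Y \<subseteq> Z"
proof (rule ccontr)
  assume "\<not> X \<inter> Y \<subseteq> Z"
  then obtain m where m: "m \<in> X \<inter> Y" "m \<notin> Z" by blast
  note X = Grass_subspace[OF XG] and Y = Grass_subspace[OF YG]
  obtain y where "y \<in> Y" "y \<notin> X"
    using adjacent_not_subset[OF Y X] \<open>adjacent sm X Y\<close> adjacent_sym by blast
  then have "sum_space X Y = adjoin X y"
    using \<open>adjacent sm X Y\<close> quot_dim1_eq_adjoin[OF X] sum_space_upper2[OF X]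
    unfolding adjacent_def by blast
  then obtain w where w: "w \<notin> sum_space X Y"
    using Grass_not_hyperplane[OF d XG] by auto
  define W where "W = adjoin (X \<inter> Y) w"
  note W = exists_common_neighbour_containing[OF XG YG \<open>adjacent sm X Y\<close> w, folded W_def]
  have ZG: "Z \<in> Grass sm" and "adjacent_or_eq W Z"
    using Z W unfolding adjacency_line_def adjacent_or_eq_def by auto
  moreover have wW: "w \<in> W"
    unfolding W_def using adjoin_vector[OF subspace_Int[OF X Y]] .
  ultimately have "adjacent sm W Z"
    using w \<open>Z \<subseteq> sum_space X Y\<close> unfolding adjacent_or_eq_def by blast
  note Z = Grass_subspace[OF ZG]
  have "m \<in> sum_space W Z"
    using sum_space_upper1[OF Z] m(1) adjoin_upper unfolding W_def by blast
  then have "sum_space W Z = adjoin Z m"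
    using \<open>adjacent sm W Z\<close> quot_dim1_eq_adjoin[OF Z] m(2)
    unfolding adjacent_def by blast
  moreover have "adjoin Z m \<subseteq> sum_space X Y"
    using adjoin_least[OF subspace_sum_space[OF X Y] \<open>Z \<subseteq> sum_space X Y\<close>] m(1)
      sum_space_upper1[OF Y] by blast
  ultimately show False
    using w wW sum_space_upper1[OF Z, of W] by blast
qed

lemma adjacency_line_subset_sum:
  assumes d: "dim_gt_2 sm" and XG: "X \<in> Grass sm" and YG: "Y \<in> Grass sm"
    and "adjacent sm X Y" and Z: "Z \<in> adjacency_line X Y" and "X \<inter> Y \<subseteq> Z"
  shows "Z \<subseteq> sum_space X Y"
proof
  fix z assume "z \<in> Z"
  show "z \<in> sum_space X Y"
  proof (rule ccontr)
    assume z: "z \<notin> sum_space X Y"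
    note X = Grass_subspace[OF XG] and Y = Grass_subspace[OF YG]
    obtain x where "x \<in> X" "x \<notin> Y"
      using adjacent_not_subset[OF X Y \<open>adjacent sm X Y\<close>] by blast
    then have "X = adjoin (X \<inter> Y) x"
      using adjacent_quot_dim1_Int(1)[OF X Y \<open>adjacent sm X Y\<close>]
        quot_dim1_eq_adjoin[OF subspace_Int[OF X Y]] by blast
    then have "X \<inter> Y \<noteq> {0}" using Grass_not_line[OF d XG] by metis
    then obtain m where m: "m \<in> X \<inter> Y" "m \<noteq> 0" using subspace_0[OF X] subspace_0[OF Y] by blast
    obtain W where W: "W \<in> Grass sm" "adjacent sm W X" "adjacent sm W Y"
      "W \<subseteq> sum_space X Y" "m \<notin> W"
      using exists_common_neighbour_avoiding[OF XG YG \<open>adjacent sm X Y\<close> m] by blast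
    have ZG: "Z \<in> Grass sm" and "adjacent_or_eq W Z"
      using Z W unfolding adjacency_line_def adjacent_or_eq_def by auto
    then have "adjacent sm W Z"
      using W(5) m(1) \<open>X \<inter> Y \<subseteq> Z\<close> unfolding adjacent_or_eq_def by blast
    note W' = Grass_subspace[OF W(1)] and Z' = Grass_subspace[OF ZG]
    have "m \<in> sum_space W Z" using sum_space_upper2[OF W'] m(1) \<open>X \<inter> Y \<subseteq> Z\<close> by blast
    then have "sum_space W Z = adjoin W m"
      using \<open>adjacent sm W Z\<close> quot_dim1_eq_adjoin[OF W'] W(5)
      unfolding adjacent_def by blast
    moreover have "adjoin W m \<subseteq> sum_space X Y"
      using adjoin_least[OF subspace_sum_space[OF X Y] W(4)] m(1) sum_space_upper1[OF Y] by blast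
    ultimately show False
      using z \<open>z \<in> Z\<close> sum_space_upper2[OF W', of Z] by blast
  qed
qed

lemma adjacency_line_eq_pencil_set:
  assumes d: "dim_gt_2 sm" and XG: "X \<in> Grass sm" and YG: "Y \<in> Grass sm" and "adjacent sm X Y"
  shows "adjacency_line X Y = pencil_set sm (X \<inter> Y) (sum_space X Y)"
proof
  note X = Grass_subspace[OF XG] and Y = Grass_subspace[OF YG]
  show "pencil_set sm (X \<inter> Y) (sum_space X Y) \<subseteq> adjacency_line X Y"
    using pencil_set_subset_adjacency_line[OF X Y \<open>adjacent sm X Y\<close>] .
  show "adjacency_line X Y \<subseteq> pencil_set sm (X \<inter> Y) (sum_space X Y)"
  proof
    fix Z assume Z: "Z \<in> adjacency_line X Y"
    then have ZG: "Z \<in> Grass sm" and "adjacent_or_eq X Z" "adjacent_or_eq Y Z"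
      using XG YG \<open>adjacent sm X Y\<close> adjacent_sym
      unfolding adjacency_line_def adjacent_or_eq_def by blast+
    note Z' = Grass_subspace[OF ZG]
    note between = quot_dim2_of_adjacent(2-5)[OF X Y \<open>adjacent sm X Y\<close>]
    consider "Z = X" | "Z = Y" | "adjacent sm Z X" "adjacent sm Z Y"
      using \<open>adjacent_or_eq X Z\<close> \<open>adjacent_or_eq Y Z\<close> adjacent_sym
      unfolding adjacent_or_eq_def by blast
    then show "Z \<in> pencil_set sm (X \<inter> Y) (sum_space X Y)"
    proof cases
      case 3
      have "X \<inter> Y \<subseteq> Z \<or> Z \<subseteq> sum_space X Y"
        using adjacent_triangle[OF X Y Z' \<open>adjacent sm X Y\<close> 3] .
      then have "X \<inter> Y \<subseteq> Z" "Z \<subseteq> sum_space X Y"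
        using adjacency_line_Int_subset[OF d XG YG \<open>adjacent sm X Y\<close> Z]
          adjacency_line_subset_sum[OF d XG YG \<open>adjacent sm X Y\<close> Z] by blast+
      moreover have "\<not> Z \<subseteq> X" "\<not> X \<subseteq> Z"
        using adjacent_not_subset[OF Z' X] adjacent_not_subset[OF X Z'] 3 adjacent_sym by blast+
      ultimately show ?thesis
        unfolding pencil_set_def using ZG between by blast
    qed (use XG YG between in \<open>auto simp: pencil_set_def\<close>)
  qed
qed

subsection \<open>Automorphisms and collineations\<close>

lemma pencil_set_in_pencils:
  assumes XG: "X \<in> Grass sm" and YG: "Y \<in> Grass sm" and "adjacent sm X Y"
  shows "pencil_set sm (X \<inter> Y) (sum_space X Y) \<in> pencils sm"
proof -
  note X = Grass_subspace[OF XG] and Y = Grass_subspace[OF YG]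
  have "quot_dim1 sm X (X \<inter> Y)" "quot_dim1 sm (sum_space X Y) X"
    using adjacent_quot_dim1_Int(1)[OF X Y \<open>adjacent sm X Y\<close>] \<open>adjacent sm X Y\<close>
    unfolding adjacent_def by blast+
  with XG show ?thesis
    unfolding pencils_def using subspace_Int[OF X Y] subspace_sum_space[OF X Y] quot_dim1_subset
    by blast
qed

lemma pencils_obtain_adjacent:
  assumes "p \<in> pencils sm"
  obtains X Y where "X \<in> Grass sm" "Y \<in> Grass sm" "adjacent sm X Y"
    "p = pencil_set sm (X \<inter> Y) (sum_space X Y)"
proof -
  obtain M N X where p: "p = pencil_set sm M N" and M: "subspace sm M"
    and XG: "X \<in> Grass sm" and qX: "quot_dim1 sm X M" and qN: "quot_dim1 sm N X"
    using assms unfolding pencils_def by blast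
  note X = Grass_subspace[OF XG] and MX = quot_dim1_subset[OF qX]
  obtain a where a: "a \<in> X" "a \<notin> M" "X = adjoin M a"
    using qX unfolding quot_dim1_iff_adjoin by blast
  obtain b where b: "b \<notin> X" "N = adjoin X b"
    using qN unfolding quot_dim1_iff_adjoin by blast
  define Y where "Y = adjoin M b"
  have "b \<notin> M" using b MX by blast
  then have YG: "Y \<in> Grass sm"
    unfolding Y_def using Grass_adjoin_exchange[OF M a(2)] a(3) XG by simp
  have "adjacent sm X Y"
    unfolding Y_def a(3) using a b(1) not_in_adjoin[OF M X MX a(1,2) b(1)]
    by (intro adjacent_adjoin[OF M]) simp_all
  moreover have "sum_space X Y = N"
    unfolding Y_def b(2) using sum_space_adjoin[OF X M MX] .
  moreover have "X \<inter> Y = M"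
    using quot_dim1_between[OF M subspace_Int[OF X Grass_subspace[OF YG]] qX]
      adjacent_not_subset[OF X Grass_subspace[OF YG] \<open>adjacent sm X Y\<close>]
      MX adjoin_upper[of M b] unfolding Y_def by blast
  ultimately show thesis using that[OF XG YG] p by blast
qed

lemma pencil_members_adjacent:
  assumes "p \<in> pencils sm" and "A \<in> p" "B \<in> p" "A \<noteq> B"
  shows "adjacent sm A B"
proof -
  obtain X Y where XG: "X \<in> Grass sm" and YG: "Y \<in> Grass sm" and "adjacent sm X Y"
    and p: "p = pencil_set sm (X \<inter> Y) (sum_space X Y)"
    using pencils_obtain_adjacent[OF assms(1)] by blast
  then show ?thesis
    using quot_dim2_adjacent(1)[OF quot_dim2_of_adjacent(1)[OF Grass_subspace[OF XG]
        Grass_subspace[OF YG] \<open>adjacent sm X Y\<close>]] assms(2-4) Grass_subspace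
    unfolding pencil_set_def by blast
qed

lemma adjacency_line_image:
  assumes bij: "bij_betw g (Grass sm) (Grass sm)"
    and adj: "\<forall>X\<in>Grass sm. \<forall>Y\<in>Grass sm. adjacent sm X Y \<longleftrightarrow> adjacent sm (g X) (g Y)"
    and XG: "X \<in> Grass sm" and YG: "Y \<in> Grass sm"
  shows "g ` adjacency_line X Y = adjacency_line (g X) (g Y)"
proof -
  have inj: "inj_on g (Grass sm)" and img: "g ` Grass sm = Grass sm"
    using bij unfolding bij_betw_def by auto
  have adj_eq: "adjacent_or_eq (g A) (g B) \<longleftrightarrow> adjacent_or_eq A B"
    if "A \<in> Grass sm" "B \<in> Grass sm" for A B
    unfolding adjacent_or_eq_def using inj_on_eq_iff[OF inj that] adj that by blast
  have line_iff: "Z \<in> adjacency_line X Y \<longleftrightarrow> g Z \<in> adjacency_line (g X) (g Y)"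
    if ZG: "Z \<in> Grass sm" for Z
  proof -
    have "(\<forall>W\<in>Grass sm. adjacent_or_eq W X \<and> adjacent_or_eq W Y \<longrightarrow> adjacent_or_eq W Z) \<longleftrightarrow>
        (\<forall>W\<in>Grass sm. adjacent_or_eq (g W) (g X) \<and> adjacent_or_eq (g W) (g Y) \<longrightarrow>
          adjacent_or_eq (g W) (g Z))"
      using adj_eq XG YG ZG by auto
    also have "\<dots> \<longleftrightarrow> (\<forall>W\<in>g ` Grass sm. adjacent_or_eq W (g X) \<and> adjacent_or_eq W (g Y) \<longrightarrow>
        adjacent_or_eq W (g Z))"
      by simp
    also have "\<dots> \<longleftrightarrow> (\<forall>W\<in>Grass sm. adjacent_or_eq W (g X) \<and> adjacent_or_eq W (g Y) \<longrightarrow>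
        adjacent_or_eq W (g Z))"
      unfolding img ..
    finally show ?thesis
      unfolding adjacency_line_def using ZG img by blast
  qed
  have line_Grass: "adjacency_line A B \<subseteq> Grass sm" for A B
    unfolding adjacency_line_def by blast
  show ?thesis
  proof (intro set_eqI iffI)
    fix z assume "z \<in> g ` adjacency_line X Y"
    then show "z \<in> adjacency_line (g X) (g Y)" using line_iff line_Grass by blast
  next
    fix z assume z: "z \<in> adjacency_line (g X) (g Y)"
    then have "z \<in> g ` Grass sm" using line_Grass img by blast
    then obtain Z where "Z \<in> Grass sm" "z = g Z" by blast
    then show "z \<in> g ` adjacency_line X Y" using line_iff z by blast
  qed
qed

lemma automorphism_image_pencil:
  assumes d: "dim_gt_2 sm" and bij: "bij_betw g (Grass sm) (Grass sm)"
    and adj: "\<forall>X\<in>Grass sm. \<forall>Y\<in>Grass sm. adjacent sm X Y \<longleftrightarrow> adjacent sm (g X) (g Y)"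
    and "p \<in> pencils sm"
  shows "g ` p \<in> pencils sm"
proof -
  obtain X Y where XG: "X \<in> Grass sm" and YG: "Y \<in> Grass sm" and "adjacent sm X Y"
    and p: "p = pencil_set sm (X \<inter> Y) (sum_space X Y)"
    using pencils_obtain_adjacent[OF \<open>p \<in> pencils sm\<close>] by blast
  have gG: "g X \<in> Grass sm" "g Y \<in> Grass sm" and "adjacent sm (g X) (g Y)"
    using bij_betwE[OF bij] XG YG adj \<open>adjacent sm X Y\<close> by blast+
  have "g ` p = pencil_set sm (g X \<inter> g Y) (sum_space (g X) (g Y))"
    using adjacency_line_image[OF bij adj XG YG] p
      adjacency_line_eq_pencil_set[OF d XG YG \<open>adjacent sm X Y\<close>]
      adjacency_line_eq_pencil_set[OF d gG \<open>adjacent sm (g X) (g Y)\<close>]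
    by simp
  then show ?thesis
    using pencil_set_in_pencils[OF gG \<open>adjacent sm (g X) (g Y)\<close>] by simp
qed

lemma collineation_preserves_adjacent:
  assumes bij: "bij_betw g (Grass sm) (Grass sm)"
    and pencils: "\<forall>p\<in>pencils sm. g ` p \<in> pencils sm"
    and XG: "X \<in> Grass sm" and YG: "Y \<in> Grass sm" and "adjacent sm X Y"
  shows "adjacent sm (g X) (g Y)"
proof -
  note X = Grass_subspace[OF XG] and Y = Grass_subspace[OF YG]
  let ?p = "pencil_set sm (X \<inter> Y) (sum_space X Y)"
  have "X \<in> ?p" "Y \<in> ?p"
    using quot_dim2_of_adjacent[OF X Y \<open>adjacent sm X Y\<close>] XG YG unfolding pencil_set_def by auto
  moreover have "g X \<noteq> g Y"
    using adjacent_not_subset[OF X Y \<open>adjacent sm X Y\<close>] bij XG YG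
    unfolding bij_betw_def inj_on_def by blast
  ultimately show ?thesis
    using pencil_members_adjacent pencils pencil_set_in_pencils[OF XG YG \<open>adjacent sm X Y\<close>]
    by blast
qed

lemma adjacent_inv_into:
  assumes bij: "bij_betw g (Grass sm) (Grass sm)"
    and adj: "\<forall>X\<in>Grass sm. \<forall>Y\<in>Grass sm. adjacent sm X Y \<longleftrightarrow> adjacent sm (g X) (g Y)"
  shows "\<forall>X\<in>Grass sm. \<forall>Y\<in>Grass sm.
    adjacent sm X Y \<longleftrightarrow> adjacent sm (inv_into (Grass sm) g X) (inv_into (Grass sm) g Y)"
  using adj bij_betwE[OF bij_betw_inv_into[OF bij]] bij_betw_inv_into_right[OF bij] by metis

lemma automorphism_is_collineation:
  assumes d: "dim_gt_2 sm" and bij: "bij_betw g (Grass sm) (Grass sm)"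
    and adj: "\<forall>X\<in>Grass sm. \<forall>Y\<in>Grass sm. adjacent sm X Y \<longleftrightarrow> adjacent sm (g X) (g Y)"
  shows "\<forall>p\<in>pencils sm. g ` p \<in> pencils sm"
    and "\<forall>p\<in>pencils sm. inv_into (Grass sm) g ` p \<in> pencils sm"
  using automorphism_image_pencil[OF d bij adj]
    automorphism_image_pencil[OF d bij_betw_inv_into[OF bij] adjacent_inv_into[OF bij adj]]
  by blast+

lemma collineation_is_automorphism:
  assumes bij: "bij_betw g (Grass sm) (Grass sm)"
    and pencils: "\<forall>p\<in>pencils sm. g ` p \<in> pencils sm"
    and pencils_inv: "\<forall>p\<in>pencils sm. inv_into (Grass sm) g ` p \<in> pencils sm"
  shows "\<forall>X\<in>Grass sm. \<forall>Y\<in>Grass sm. adjacent sm X Y \<longleftrightarrow> adjacent sm (g X) (g Y)"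
proof (intro ballI iffI)
  fix X Y assume "X \<in> Grass sm" "Y \<in> Grass sm"
  show "adjacent sm (g X) (g Y)" if "adjacent sm X Y"
    using collineation_preserves_adjacent[OF bij pencils \<open>X \<in> Grass sm\<close> \<open>Y \<in> Grass sm\<close> that] .
  assume "adjacent sm (g X) (g Y)"
  then have "adjacent sm (inv_into (Grass sm) g (g X)) (inv_into (Grass sm) g (g Y))"
    using collineation_preserves_adjacent[OF bij_betw_inv_into[OF bij] pencils_inv]
      bij_betw_apply[OF bij] \<open>X \<in> Grass sm\<close> \<open>Y \<in> Grass sm\<close> by blast
  then show "adjacent sm X Y"
    using bij_betw_inv_into_left[OF bij] \<open>X \<in> Grass sm\<close> \<open>Y \<in> Grass sm\<close> by simp
qed

end

theorem corollary5p1: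
  fixes sm :: "'k::division_ring \<Rightarrow> 'v::ab_group_add \<Rightarrow> 'v"
    and \<kappa> :: "'v set \<Rightarrow> 'v set"
  assumes "left_vector_space sm"
    and "dim_gt_2 sm"
    and "Grass sm \<noteq> {}"
    and "bij_betw \<kappa> (Grass sm) (Grass sm)"
  shows "(\<forall>X\<in>Grass sm. \<forall>Y\<in>Grass sm. adjacent sm X Y \<longleftrightarrow> adjacent sm (\<kappa> X) (\<kappa> Y))
     \<longleftrightarrow> ((\<forall>p\<in>pencils sm. \<kappa> ` p \<in> pencils sm) \<and>
          (\<forall>p\<in>pencils sm. inv_into (Grass sm) \<kappa> ` p \<in> pencils sm))"
proof -
  interpret left_vs sm by (rule left_vs.intro) fact
  show ?thesis
    using automorphism_is_collineation[OF assms(2,4)] collineation_is_automorphism[OF assms(4)]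
    by blast
qed

end
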